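(* Let $L\ge1$ and let $\pi_L:\mathfrak{OA}\to\mathfrak{OA}_{1,L}=\mathfrak{OA}/\mathfrak I_{(t-1)^L}$ be the projection. There are unique elements $\underline X_k,\underline Y_k\in\mathfrak{OA}_{1,L}$ ($0\le k<L$) such that for all $m\in\mathbb Z$ $$\pi_L(A_m)=\sum_{k=0}^{L-1}\binom mk\underline X_k,\qquad \pi_L(G_m)=\sum_{k=0}^{L-1}(-1)^k\binom mk\underline Y_k .$$ Moreover $\underline Y_k=\frac{(-1)^k}{4}[\underline X_k,\underline X_0]$ for $0\le k<L$.
   Context: Work over $\mathbb C$. $\mathfrak{sl}_2$ has basis $e,f,h$ with $[e,f]=h$, $[h,e]=2e$, $[h,f]=-2f$. $L(\mathfrak{sl}_2)=\mathbb C[t,t^{-1}]\otimes\mathfrak{sl}_2$ is the loop algebra with bracket $[p(t)x,q(t)y]=p(t)q(t)[x,y]$. The Onsager algebra is the Lie subalgebra $\mathfrak{OA}=\{p(t)e+p(t^{-1})f+q(t)h:\ p,q\in\mathbb C[t,t^{-1}],\ q(t^{-1})=-q(t)\}$ of $L(\mathfrak{sl}_2)$, spanned by $A_m=2t^me+2t^{-m}f$ and $G_m=(t^m-t^{-m})h$, $m\in\mathbb Z$. $\mathfrak I_{(t-1)^L}=\{p(t)e+p(t^{-1})f+q(t)h\in\mathfrak{OA}: p,q\in(t-1)^L\mathbb C[t,t^{-1}]\}$. For $m\in\mathbb Z$, $k\ge0$: $\binom mk=m(m-1)\cdots(m-k+1)/k!$, $\binom m0=1$. *)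

theory Defs
  imports Complex_Main "HOL-Library.Poly_Mapping" "HOL-Library.Product_Plus"
begin

text \<open>Laurent polynomials C[t,t^-1] as finitely supported maps int => complex
  (the exponent n carries the coefficient of t^n); convolution product.\<close>
type_synonym lpoly = "int \<Rightarrow>\<^sub>0 complex"

definition tpow :: "int \<Rightarrow> lpoly" where
  "tpow m = Poly_Mapping.single m 1"

definition lconst :: "complex \<Rightarrow> lpoly" where
  "lconst c = Poly_Mapping.single 0 c"

definition lp_inv :: "lpoly \<Rightarrow> lpoly" where
  "lp_inv p = (\<Sum>n\<in>Poly_Mapping.keys p. Poly_Mapping.single (- n) (Poly_Mapping.lookup p n))"

text \<open>Element p e + q f + r h of the loop algebra L(sl_2) represented as (p,q,r).\<close>
type_synonym loop = "lpoly \<times> lpoly \<times> lpoly"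

definition lbr :: "loop \<Rightarrow> loop \<Rightarrow> loop" where
  "lbr x y = (case x of (a1, b1, c1) \<Rightarrow> case y of (a2, b2, c2) \<Rightarrow>
     (2 * (c1 * a2 - a1 * c2), 2 * (b1 * c2 - c1 * b2), a1 * b2 - b1 * a2))"

definition lscale :: "complex \<Rightarrow> loop \<Rightarrow> loop" where
  "lscale c x = (case x of (a, b, r) \<Rightarrow> (lconst c * a, lconst c * b, lconst c * r))"

definition OA :: "loop set" where
  "OA = {(p, q, r). q = lp_inv p \<and> lp_inv r = - r}"

definition A_el :: "int \<Rightarrow> loop" where
  "A_el m = (2 * tpow m, 2 * tpow (- m), 0)"

definition G_el :: "int \<Rightarrow> loop" where
  "G_el m = (0, 0, tpow m - tpow (- m))"

definition Iideal :: "nat \<Rightarrow> loop set" where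
  "Iideal L = {(p, q, r) \<in> OA. (\<exists>u. p = (tpow 1 - 1) ^ L * u) \<and> (\<exists>u. r = (tpow 1 - 1) ^ L * u)}"

text \<open>Equality in the quotient OA_{1,L} = OA / I_{(t-1)^L}, via representatives.\<close>
definition qeq :: "nat \<Rightarrow> loop \<Rightarrow> loop \<Rightarrow> bool" where
  "qeq L x y \<longleftrightarrow> x - y \<in> Iideal L"

definition binomi :: "int \<Rightarrow> nat \<Rightarrow> complex" where
  "binomi m k = (of_int m :: complex) gchoose k"

definition rep_A :: "nat \<Rightarrow> (nat \<Rightarrow> loop) \<Rightarrow> bool" where
  "rep_A L X \<longleftrightarrow> (\<forall>m. qeq L (A_el m) (\<Sum>k<L. lscale (binomi m k) (X k)))"

definition rep_G :: "nat \<Rightarrow> (nat \<Rightarrow> loop) \<Rightarrow> bool" where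
  "rep_G L Y \<longleftrightarrow> (\<forall>m. qeq L (G_el m) (\<Sum>k<L. lscale ((-1) ^ k * binomi m k) (Y k)))"

end

theory Submission
  imports Defs
begin

(* Write s = t - 1. Because t = 1 + s is a unit, Pascal's rule propagates the congruence
   t^m = sum_{k<L} binom(m,k) s^k  (mod s^L)  from m to m + 1 and back, so it holds for every
   integer m. Applied to A_m = 2 t^m e + 2 t^-m f and to G_m = (t^m - t^-m) h it gives the
   expansions with X_k = 2 s^k e + 2 s(t^-1)^k f and Y_k = ((-s)^k - (-s(t^-1))^k) h; the
   remainders lie in the ideal because s(t^-1) = -t^-1 s, so divisibility by s^L survives
   t |-> t^-1. Uniqueness holds because the coefficient matrices (binom(j,k)) and
   ((-1)^k binom(j,k)), j, k < L, obtained from m = 0, ..., L-1, are triangular with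
   nonzero diagonal. The bracket relation is a direct computation:
   [p e + p(t^-1) f, q e + q(t^-1) f] = (p q(t^-1) - p(t^-1) q) h. *)

lemma lookup_lp_inv: "Poly_Mapping.lookup (lp_inv p) n = Poly_Mapping.lookup p (- n)"
proof -
  have "Poly_Mapping.lookup (lp_inv p) n =
      (\<Sum>k\<in>Poly_Mapping.keys p. Poly_Mapping.lookup p k when k = - n)"
    unfolding lp_inv_def lookup_sum lookup_single by (rule sum.cong) (auto simp: when_def)
  also have "\<dots> = Poly_Mapping.lookup p (- n)"
    by (simp add: when_def sum.delta in_keys_iff)
  finally show ?thesis .
qed

lemma lp_inv_add: "lp_inv (p + q) = lp_inv p + lp_inv q"
  by (rule poly_mapping_eqI) (simp add: lookup_lp_inv lookup_add)

lemma lp_inv_diff: "lp_inv (p - q) = lp_inv p - lp_inv q"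
  by (rule poly_mapping_eqI) (simp add: lookup_lp_inv lookup_minus)

lemma lp_inv_lp_inv [simp]: "lp_inv (lp_inv p) = p"
  by (rule poly_mapping_eqI) (simp add: lookup_lp_inv)

lemma lp_inv_single: "lp_inv (Poly_Mapping.single k c) = Poly_Mapping.single (- k) c"
  by (rule poly_mapping_eqI) (simp add: lookup_lp_inv lookup_single when_def)

lemma lp_inv_tpow: "lp_inv (tpow m) = tpow (- m)"
  by (simp add: tpow_def lp_inv_single)

lemma lp_inv_lconst: "lp_inv (lconst c) = lconst c"
  by (simp add: lconst_def lp_inv_single)

lemma lp_inv_0 [simp]: "lp_inv 0 = 0"
  by (simp add: lp_inv_def)

lemma lp_inv_one [simp]: "lp_inv 1 = 1"
  using lp_inv_single[of 0 1] by simp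

lemma lp_inv_numeral [simp]: "lp_inv (numeral n) = numeral n"
  using lp_inv_single[of 0 "numeral n"] by simp

lemma lp_inv_mult: "lp_inv (p * q) = lp_inv p * lp_inv q"
proof (rule poly_mapping_eqI)
  fix n
  have "Poly_Mapping.lookup (lp_inv p * lp_inv q) n =
      Sum_any (\<lambda>l. Poly_Mapping.lookup p (- l) *
        Sum_any (\<lambda>k. Poly_Mapping.lookup q (- k) when n = l + k))"
    by (simp add: lookup_mult lookup_lp_inv)
  also have "\<dots> = Sum_any (\<lambda>l. Poly_Mapping.lookup p l *
        Sum_any (\<lambda>k. Poly_Mapping.lookup q k when - n = l + k))"
    by (rule Sum_any.reindex_cong[of uminus])
      (auto simp: fun_eq_iff bij_uminus when_def intro!: Sum_any.reindex_cong[of uminus])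
  finally show "Poly_Mapping.lookup (lp_inv (p * q)) n = Poly_Mapping.lookup (lp_inv p * lp_inv q) n"
    by (simp add: lookup_mult lookup_lp_inv)
qed

lemma lp_inv_power: "lp_inv (p ^ n) = lp_inv p ^ n"
  by (induction n) (simp_all add: lp_inv_mult)

lemma lp_inv_lconst_mult: "lp_inv (lconst c * p) = lconst c * lp_inv p"
  by (simp add: lp_inv_mult lp_inv_lconst)

lemma lconst_mult: "lconst a * lconst b = lconst (a * b)"
  by (simp add: lconst_def mult_single)

lemma lconst_0 [simp]: "lconst 0 = 0"
  by (simp add: lconst_def)

lemma lconst_one [simp]: "lconst 1 = 1"
  by (simp add: lconst_def)

lemma lconst_numeral [simp]: "lconst (numeral n) = numeral n"
  by (simp add: lconst_def)

lemma lconst_neg_one_power: "lconst ((- 1) ^ k) = (- 1) ^ k"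
  by (induction k) (simp_all add: lconst_def single_uminus flip: lconst_mult)

lemma tpow_add: "tpow (a + b) = tpow a * tpow b"
  by (simp add: tpow_def mult_single)

lemma tpow_0 [simp]: "tpow 0 = 1"
  by (simp add: tpow_def)

definition tm1 :: lpoly where
  "tm1 = tpow 1 - 1"

lemma lp_inv_tm1: "lp_inv tm1 = - tpow (- 1) * tm1"
proof -
  have "tpow (- 1) * tpow 1 = 1"
    by (simp flip: tpow_add)
  then show ?thesis
    by (simp add: tm1_def lp_inv_diff lp_inv_tpow algebra_simps)
qed

lemma tm1_power_dvd_lp_inv:
  assumes "tm1 ^ L dvd p"
  shows "tm1 ^ L dvd lp_inv p"
proof -
  obtain u where "p = tm1 ^ L * u"
    using assms by (auto simp: dvd_def)
  then have "lp_inv p = lp_inv tm1 ^ L * lp_inv u"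
    by (simp add: lp_inv_mult lp_inv_power)
  moreover have "tm1 ^ L dvd lp_inv tm1 ^ L"
    by (simp add: lp_inv_tm1 dvd_power_same)
  ultimately show ?thesis
    by simp
qed

lemma binomi_0 [simp]: "binomi m 0 = 1"
  by (simp add: binomi_def)

lemma binomi_Suc_Suc: "binomi (m + 1) (Suc k) = binomi m k + binomi m (Suc k)"
  by (simp add: binomi_def gbinomial_Suc_Suc)

lemma binomi_of_nat: "binomi (int j) k = of_nat (j choose k)"
  by (simp add: binomi_def binomial_gbinomial)

lemma binomial_sum_shift:
  "(\<Sum>k<Suc n. lconst (binomi (m + 1) k) * tm1 ^ k) =
    tpow 1 * (\<Sum>k<Suc n. lconst (binomi m k) * tm1 ^ k) - lconst (binomi m n) * tm1 ^ Suc n"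
proof (induction n)
  case 0
  show ?case by (simp add: tm1_def algebra_simps)
next
  case (Suc n)
  show ?case
    unfolding sum.lessThan_Suc[of _ "Suc n"] Suc binomi_Suc_Suc
    by (simp add: tm1_def lconst_def single_add algebra_simps)
qed

lemma tpow_binomial_congruence:
  "tm1 ^ L dvd tpow m - (\<Sum>k<L. lconst (binomi m k) * tm1 ^ k)"
proof (cases L)
  case (Suc n)
  define r where "r i = tpow i - (\<Sum>k<L. lconst (binomi i k) * tm1 ^ k)" for i
  have step: "r (i + 1) = tpow 1 * r i + lconst (binomi i n) * tm1 ^ L" for i
    unfolding r_def Suc binomial_sum_shift tpow_add
    by (simp add: algebra_simps del: sum.lessThan_Suc)
  have unit: "tpow (- 1) * tpow 1 = 1"
    by (simp flip: tpow_add)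
  show ?thesis
    unfolding r_def[symmetric]
  proof (induction m rule: int_induct[where k = 0])
    case base
    have "(\<Sum>k<L. lconst (binomi 0 k) * tm1 ^ k) = 1"
      by (simp add: Suc sum.lessThan_Suc_shift binomi_def del: sum.lessThan_Suc)
    then show ?case by (simp add: r_def)
  next
    case (step1 i)
    then show ?case
      by (simp add: step)
  next
    case (step2 i)
    have "r (i - 1) = tpow (- 1) * (r i - lconst (binomi (i - 1) n) * tm1 ^ L)"
      using step[of "i - 1"] by (simp add: mult.assoc[symmetric] unit)
    then show ?case
      using step2 by simp
  qed
qed simp

lemma lscale_triple [simp]: "lscale c (a, b, r) = (lconst c * a, lconst c * b, lconst c * r)"
  by (simp add: lscale_def)

lemma lscale_lscale: "lscale c (lscale d x) = lscale (c * d) x"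
  by (cases x) (simp add: mult.assoc lconst_mult)

lemma lscale_diff: "lscale c (x - y) = lscale c x - lscale c y"
  by (cases x, cases y) (simp add: algebra_simps)

lemma lscale_0 [simp]: "lscale 0 x = 0"
  by (cases x) (simp add: zero_prod_def)

lemma lscale_one [simp]: "lscale 1 x = x"
  by (cases x) simp

lemma OA_0: "0 \<in> OA"
  by (simp add: zero_prod_def OA_def)

lemma OA_add: "x \<in> OA \<Longrightarrow> y \<in> OA \<Longrightarrow> x + y \<in> OA"
  by (cases x, cases y) (auto simp: OA_def lp_inv_add)

lemma OA_diff: "x \<in> OA \<Longrightarrow> y \<in> OA \<Longrightarrow> x - y \<in> OA"
  by (cases x, cases y) (auto simp: OA_def lp_inv_diff)

lemma OA_lscale: "x \<in> OA \<Longrightarrow> lscale c x \<in> OA"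
  by (cases x) (auto simp: OA_def lp_inv_lconst_mult)

lemma Iideal_iff: "x \<in> Iideal L \<longleftrightarrow> x \<in> OA \<and> tm1 ^ L dvd fst x \<and> tm1 ^ L dvd snd (snd x)"
  by (cases x) (auto simp: Iideal_def tm1_def dvd_def)

lemma Iideal_0: "0 \<in> Iideal L"
  by (simp add: Iideal_iff OA_0)

lemma Iideal_add: "x \<in> Iideal L \<Longrightarrow> y \<in> Iideal L \<Longrightarrow> x + y \<in> Iideal L"
  by (simp add: Iideal_iff OA_add)

lemma Iideal_diff: "x \<in> Iideal L \<Longrightarrow> y \<in> Iideal L \<Longrightarrow> x - y \<in> Iideal L"
  by (simp add: Iideal_iff OA_diff)

lemma Iideal_lscale: "x \<in> Iideal L \<Longrightarrow> lscale c x \<in> Iideal L"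
  using OA_lscale[of x c] by (cases x) (auto simp: Iideal_iff)

lemma Iideal_sum: "(\<And>k. k \<in> A \<Longrightarrow> f k \<in> Iideal L) \<Longrightarrow> sum f A \<in> Iideal L"
  by (induction A rule: infinite_finite_induct) (auto intro: Iideal_0 Iideal_add)

lemma qeq_sym: "qeq L x y \<Longrightarrow> qeq L y x"
  using Iideal_diff[OF Iideal_0] by (fastforce simp: qeq_def)

lemma qeq_trans: "qeq L x y \<Longrightarrow> qeq L y z \<Longrightarrow> qeq L x z"
  using Iideal_add by (fastforce simp: qeq_def)

lemma qeq_sum_lscale:
  "qeq L (\<Sum>k\<in>A. lscale (c k) (U k)) (\<Sum>k\<in>A. lscale (c k) (V k)) \<longleftrightarrow>
    (\<Sum>k\<in>A. lscale (c k) (U k - V k)) \<in> Iideal L"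
  by (simp add: qeq_def lscale_diff sum_subtractf)

lemma qeq_triangular_cancel:
  assumes eq: "\<And>j. j < L \<Longrightarrow>
      qeq L (\<Sum>k<L. lscale (c j k) (U k)) (\<Sum>k<L. lscale (c j k) (V k))"
    and diag: "\<And>j. c j j \<noteq> 0"
    and upper: "\<And>j k. j < k \<Longrightarrow> c j k = 0"
  shows "j < L \<Longrightarrow> qeq L (U j) (V j)"
proof (induction j rule: less_induct)
  case (less j)
  define D where "D k = U k - V k" for k
  have "(\<Sum>k<L. lscale (c j k) (D k)) = (\<Sum>k<Suc j. lscale (c j k) (D k))"
    by (rule sum.mono_neutral_cong_right) (use less.prems upper in auto)
  then have "lscale (c j j) (D j) = (\<Sum>k<L. lscale (c j k) (D k)) - (\<Sum>k<j. lscale (c j k) (D k))"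
    by simp
  also have "\<dots> \<in> Iideal L"
  proof (rule Iideal_diff)
    show "(\<Sum>k<L. lscale (c j k) (D k)) \<in> Iideal L"
      using eq[OF less.prems] by (simp add: qeq_sum_lscale D_def)
    show "(\<Sum>k<j. lscale (c j k) (D k)) \<in> Iideal L"
      using less.IH less.prems by (auto simp: D_def qeq_def intro!: Iideal_sum Iideal_lscale)
  qed
  finally have "lscale (1 / c j j) (lscale (c j j) (D j)) \<in> Iideal L"
    by (rule Iideal_lscale)
  then show ?case
    using diag[of j] by (simp add: lscale_lscale qeq_def D_def)
qed

definition OA_ef :: "lpoly \<Rightarrow> loop" where
  "OA_ef p = (p, lp_inv p, 0)"

definition OA_h :: "lpoly \<Rightarrow> loop" where
  "OA_h q = (0, 0, q - lp_inv q)"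

lemma OA_ef_in_OA: "OA_ef p \<in> OA"
  by (simp add: OA_ef_def OA_def)

lemma OA_h_in_OA: "OA_h q \<in> OA"
  by (simp add: OA_h_def OA_def lp_inv_diff)

lemma OA_ef_diff: "OA_ef p - OA_ef q = OA_ef (p - q)"
  by (simp add: OA_ef_def lp_inv_diff)

lemma OA_h_diff: "OA_h p - OA_h q = OA_h (p - q)"
  by (simp add: OA_h_def lp_inv_diff)

lemma lscale_OA_ef: "lscale c (OA_ef p) = OA_ef (lconst c * p)"
  by (simp add: OA_ef_def lp_inv_lconst_mult)

lemma lscale_OA_h: "lscale c (OA_h q) = OA_h (lconst c * q)"
  by (simp add: OA_h_def lp_inv_diff lp_inv_lconst_mult right_diff_distrib)

lemma sum_OA_ef: "(\<Sum>k\<in>A. OA_ef (p k)) = OA_ef (\<Sum>k\<in>A. p k)"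
  by (induction A rule: infinite_finite_induct) (simp_all add: OA_ef_def lp_inv_add zero_prod_def)

lemma sum_OA_h: "(\<Sum>k\<in>A. OA_h (q k)) = OA_h (\<Sum>k\<in>A. q k)"
  by (induction A rule: infinite_finite_induct) (simp_all add: OA_h_def lp_inv_add zero_prod_def)

lemma OA_ef_in_Iideal: "tm1 ^ L dvd p \<Longrightarrow> OA_ef p \<in> Iideal L"
  by (simp add: Iideal_iff OA_ef_in_OA) (simp add: OA_ef_def)

lemma OA_h_in_Iideal: "tm1 ^ L dvd q \<Longrightarrow> OA_h q \<in> Iideal L"
  by (simp add: Iideal_iff OA_h_in_OA) (simp add: OA_h_def tm1_power_dvd_lp_inv)

lemma lbr_OA_ef: "lbr (OA_ef p) (OA_ef q) = OA_h (p * lp_inv q)"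
  by (simp add: lbr_def OA_ef_def OA_h_def lp_inv_mult mult.commute)

lemma A_el_eq: "A_el m = OA_ef (2 * tpow m)"
  by (simp add: A_el_def OA_ef_def lp_inv_mult lp_inv_tpow)

lemma G_el_eq: "G_el m = OA_h (tpow m)"
  by (simp add: G_el_def OA_h_def lp_inv_tpow)

definition X_bar :: "nat \<Rightarrow> loop" where
  "X_bar k = OA_ef (2 * tm1 ^ k)"

definition Y_bar :: "nat \<Rightarrow> loop" where
  "Y_bar k = OA_h ((- tm1) ^ k)"

lemma rep_A_X_bar: "rep_A L X_bar"
  unfolding rep_A_def qeq_def
proof
  fix m
  have "A_el m - (\<Sum>k<L. lscale (binomi m k) (X_bar k)) =
      OA_ef (2 * (tpow m - (\<Sum>k<L. lconst (binomi m k) * tm1 ^ k)))"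
    by (simp add: A_el_eq X_bar_def lscale_OA_ef sum_OA_ef OA_ef_diff algebra_simps sum_distrib_left)
  also have "\<dots> \<in> Iideal L"
    by (intro OA_ef_in_Iideal dvd_mult tpow_binomial_congruence)
  finally show "A_el m - (\<Sum>k<L. lscale (binomi m k) (X_bar k)) \<in> Iideal L" .
qed

lemma rep_G_Y_bar: "rep_G L Y_bar"
  unfolding rep_G_def qeq_def
proof
  fix m
  have "lconst ((- 1) ^ k * binomi m k) * (- tm1) ^ k = lconst (binomi m k) * tm1 ^ k" for k
    by (simp flip: lconst_mult add: lconst_neg_one_power power_mult_distrib[symmetric])
  then have "G_el m - (\<Sum>k<L. lscale ((- 1) ^ k * binomi m k) (Y_bar k)) =
      OA_h (tpow m - (\<Sum>k<L. lconst (binomi m k) * tm1 ^ k))"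
    by (simp add: G_el_eq Y_bar_def lscale_OA_h sum_OA_h OA_h_diff)
  also have "\<dots> \<in> Iideal L"
    by (intro OA_h_in_Iideal tpow_binomial_congruence)
  finally show "G_el m - (\<Sum>k<L. lscale ((- 1) ^ k * binomi m k) (Y_bar k)) \<in> Iideal L" .
qed

lemma Y_bar_eq_lbr: "Y_bar k = lscale ((- 1) ^ k / 4) (lbr (X_bar k) (X_bar 0))"
proof -
  have "lconst ((- 1) ^ k / 4) * 4 = lconst ((- 1) ^ k)"
    using lconst_mult[of "(- 1) ^ k / 4" 4] by simp
  then show ?thesis
    by (simp add: Y_bar_def X_bar_def lbr_OA_ef lscale_OA_h lp_inv_mult lconst_neg_one_power
        power_mult_distrib[symmetric] mult_ac)
qed

lemma rep_A_unique:
  assumes "rep_A L X" "rep_A L X'" "k < L"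
  shows "qeq L (X' k) (X k)"
proof (rule qeq_triangular_cancel[where c = "\<lambda>j k. binomi (int j) k"])
  show "qeq L (\<Sum>k<L. lscale (binomi (int j) k) (X' k)) (\<Sum>k<L. lscale (binomi (int j) k) (X k))"
    for j
    using assms(1,2) unfolding rep_A_def by (meson qeq_sym qeq_trans)
qed (use assms(3) in \<open>simp_all add: binomi_of_nat\<close>)

lemma rep_G_unique:
  assumes "rep_G L Y" "rep_G L Y'" "k < L"
  shows "qeq L (Y' k) (Y k)"
proof (rule qeq_triangular_cancel[where c = "\<lambda>j k. (- 1) ^ k * binomi (int j) k"])
  show "qeq L (\<Sum>k<L. lscale ((- 1) ^ k * binomi (int j) k) (Y' k))
      (\<Sum>k<L. lscale ((- 1) ^ k * binomi (int j) k) (Y k))" for j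
    using assms(1,2) unfolding rep_G_def by (meson qeq_sym qeq_trans)
qed (use assms(3) in \<open>simp_all add: binomi_of_nat\<close>)

theorem lemma6:
  fixes L :: nat
  assumes "L \<ge> 1"
  shows "\<exists>X Y. (\<forall>k<L. X k \<in> OA \<and> Y k \<in> OA) \<and> rep_A L X \<and> rep_G L Y \<and>
     (\<forall>X' Y'. (\<forall>k<L. X' k \<in> OA \<and> Y' k \<in> OA) \<and> rep_A L X' \<and> rep_G L Y' \<longrightarrow>
        (\<forall>k<L. qeq L (X' k) (X k) \<and> qeq L (Y' k) (Y k))) \<and>
     (\<forall>k<L. qeq L (Y k) (lscale ((-1) ^ k / 4) (lbr (X k) (X 0))))"
proof (rule exI[of _ X_bar], rule exI[of _ Y_bar], intro conjI allI impI)
  show "X_bar k \<in> OA" "Y_bar k \<in> OA" for k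
    by (simp_all add: X_bar_def Y_bar_def OA_ef_in_OA OA_h_in_OA)
  show "rep_A L X_bar" "rep_G L Y_bar"
    by (rule rep_A_X_bar rep_G_Y_bar)+
  show "qeq L (Y_bar k) (lscale ((-1) ^ k / 4) (lbr (X_bar k) (X_bar 0)))" for k
    by (simp flip: Y_bar_eq_lbr add: qeq_def Iideal_0)
  show "qeq L (X' k) (X_bar k)" "qeq L (Y' k) (Y_bar k)"
    if "(\<forall>k<L. X' k \<in> OA \<and> Y' k \<in> OA) \<and> rep_A L X' \<and> rep_G L Y'" and "k < L" for X' Y' k
    using that rep_A_unique[OF rep_A_X_bar] rep_G_unique[OF rep_G_Y_bar] by blast+
qed

end
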